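(* Let $f=cM_0+\sum_{i=1}^dc_iM_i\in\mathbb C[U_1,\ldots,U_n]$, where $M_0=U_1^{k_1}\cdots U_n^{k_n}$ with $k_1\ge1$ and $k_1\ge k_i$ for $i=2,\ldots,n$; $c,c_1,\ldots,c_d\in\mathbb C$ with $c\ne0$; and $M_1,\ldots,M_d$ are monomials each divisible by $U_1^{k_1+1}$. Then there exists $m\ge1$ with $\mathcal L(f^m)\ne0$.
   Context: $\mathcal L:\mathbb C[U_1,\ldots,U_n]\to\mathbb C$ is the $\mathbb C$-linear map defined on monomials by $\mathcal L(U_1^{\ell_1}\cdots U_n^{\ell_n})=\ell_1!\cdots\ell_n!$. *)

theory Defs
  imports Complex_Main "HOL-Library.Poly_Mapping"
begin

text \<open>Polynomials in variables U_i (i :: nat) with complex coefficients are represented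
as finitely supported maps from exponent vectors (nat =>0 nat) to coefficients.
The monomial U^a is Poly_Mapping.single a 1.\<close>

type_synonym cpoly = "(nat \<Rightarrow>\<^sub>0 nat) \<Rightarrow>\<^sub>0 complex"

definition Lfun :: "cpoly \<Rightarrow> complex" where
  "Lfun p = (\<Sum>a\<in>Poly_Mapping.keys p. Poly_Mapping.lookup p a * (\<Prod>i\<in>Poly_Mapping.keys a. of_nat (fact (Poly_Mapping.lookup a i))))"

end

theory Submission
  imports Defs "HOL-Number_Theory.Number_Theory" "HOL-Computational_Algebra.Fundamental_Theorem_Algebra"
begin

(* Write f = c M_0 + g and k = k_1.  Let R be the subring of the complex numbers
   generated by c and the c_i.  If q = m k + 1 is prime, then f^m = c^m M_0^m + G where every
   monomial of G has U_1-exponent at least q, so L(G) lies in q R, whereas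
   L(c^m M_0^m) = c^m N with N a product of factorials of numbers below q, hence prime to q.
   Thus L(f^m) = 0 would make c^m divisible by q in R.  This is excluded for all but finitely
   many primes q: in a finitely generated subring of the complex numbers, only finitely many
   rational primes divide a power of a given nonzero element.  Since there are infinitely many
   primes q = 1 (mod k), some m satisfies L(f^m) \<noteq> 0. *)

section \<open>Subrings of the complex numbers and polynomials over them\<close>

definition is_subring :: "complex set \<Rightarrow> bool" where
  "is_subring R \<longleftrightarrow> 0 \<in> R \<and> 1 \<in> R \<and> (\<forall>x\<in>R. \<forall>y\<in>R. x + y \<in> R \<and> x * y \<in> R) \<and> (\<forall>x\<in>R. - x \<in> R)"

lemma subringD:
  assumes "is_subring R"
  shows subring_0: "0 \<in> R" and subring_1: "1 \<in> R"
    and subring_add: "x \<in> R \<Longrightarrow> y \<in> R \<Longrightarrow> x + y \<in> R"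
    and subring_mult: "x \<in> R \<Longrightarrow> y \<in> R \<Longrightarrow> x * y \<in> R"
    and subring_uminus: "x \<in> R \<Longrightarrow> - x \<in> R"
    and subring_diff: "x \<in> R \<Longrightarrow> y \<in> R \<Longrightarrow> x - y \<in> R"
  using assms unfolding is_subring_def
  by (auto simp del: add_uminus_conv_diff simp add: diff_conv_add_uminus)

lemma subring_sum: "is_subring R \<Longrightarrow> (\<And>i. i \<in> A \<Longrightarrow> f i \<in> R) \<Longrightarrow> sum f A \<in> R"
  by (induction A rule: infinite_finite_induct) (auto intro: subringD)

lemma subring_power: "is_subring R \<Longrightarrow> x \<in> R \<Longrightarrow> x ^ n \<in> R"
  by (induction n) (auto intro: subringD)

lemma subring_of_nat: "is_subring R \<Longrightarrow> of_nat n \<in> R"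
  by (induction n) (auto intro: subringD)

lemma subring_of_int: "is_subring R \<Longrightarrow> of_int z \<in> R"
  by (cases z rule: int_cases) (auto intro: subringD subring_of_nat)

lemma subring_Ints: "is_subring \<int>"
  unfolding is_subring_def by auto

definition poly_over :: "complex set \<Rightarrow> complex poly \<Rightarrow> bool" where
  "poly_over R P \<longleftrightarrow> (\<forall>n. coeff P n \<in> R)"

context
  fixes R :: "complex set"
  assumes R: "is_subring R"
begin

lemma poly_over_0: "poly_over R 0"
  and poly_over_1: "poly_over R 1"
  using R by (auto simp: poly_over_def coeff_1 intro: subringD)

lemma poly_over_const: "c \<in> R \<Longrightarrow> poly_over R [:c:]"
  using R by (auto simp: poly_over_def coeff_pCons split: nat.splits intro: subringD)

lemma poly_over_monom: "c \<in> R \<Longrightarrow> poly_over R (monom c n)"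
  using R by (auto simp: poly_over_def coeff_monom intro: subringD)

lemma poly_over_add: "poly_over R P \<Longrightarrow> poly_over R Q \<Longrightarrow> poly_over R (P + Q)"
  and poly_over_diff: "poly_over R P \<Longrightarrow> poly_over R Q \<Longrightarrow> poly_over R (P - Q)"
  and poly_over_uminus: "poly_over R P \<Longrightarrow> poly_over R (- P)"
  and poly_over_smult: "c \<in> R \<Longrightarrow> poly_over R P \<Longrightarrow> poly_over R (smult c P)"
  using R by (auto simp: poly_over_def intro: subringD)

lemma poly_over_mult: "poly_over R P \<Longrightarrow> poly_over R Q \<Longrightarrow> poly_over R (P * Q)"
  using R unfolding poly_over_def coeff_mult by (auto intro!: subring_sum subringD)

lemma poly_over_power: "poly_over R P \<Longrightarrow> poly_over R (P ^ n)"
  by (induction n) (auto intro: poly_over_mult poly_over_1)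

lemma poly_over_prod: "(\<And>i. i \<in> A \<Longrightarrow> poly_over R (f i)) \<Longrightarrow> poly_over R (prod f A)"
  by (induction A rule: infinite_finite_induct) (auto intro: poly_over_mult poly_over_1)

lemma poly_over_pderiv: "poly_over R P \<Longrightarrow> poly_over R (pderiv P)"
  using R by (auto simp: poly_over_def coeff_pderiv intro: subringD subring_of_nat)

lemma poly_over_poly: "poly_over R P \<Longrightarrow> x \<in> R \<Longrightarrow> poly P x \<in> R"
  using R unfolding poly_altdef poly_over_def by (auto intro!: subring_sum subringD subring_power)

lemma division_step:
  assumes F: "poly_over R F" and P: "poly_over R P" "P \<noteq> 0" "degree F \<le> degree P"
  shows "\<exists>M P'. poly_over R M \<and> poly_over R P' \<and> smult (lead_coeff F) P = P' + M * F
            \<and> (P' = 0 \<or> degree P' < degree P)"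
proof -
  let ?M = "monom (lead_coeff P) (degree P - degree F)"
  define P' where "P' = smult (lead_coeff F) P - ?M * F"
  have M: "poly_over R ?M"
    using P(1) by (intro poly_over_monom) (simp add: poly_over_def)
  have P': "poly_over R P'"
    unfolding P'_def using P(1) F M by (intro poly_over_diff poly_over_smult poly_over_mult)
      (auto simp: poly_over_def)
  have "degree (?M * F) \<le> degree P"
    using P(2,3) by (intro order.trans[OF degree_mult_le]) (simp add: degree_monom_eq)
  then have deg_le: "degree P' \<le> degree P"
    unfolding P'_def by (intro degree_diff_le) (auto intro: order.trans[OF degree_smult_le])
  have "coeff (?M * F) (degree P) = lead_coeff P * lead_coeff F"
    using P(3) by (simp add: coeff_monom_mult)
  then have "coeff P' (degree P) = 0"
    by (simp add: P'_def mult.commute)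
  with deg_le have "P' = 0 \<or> degree P' < degree P"
    by (metis le_neq_implies_less leading_coeff_0_iff)
  moreover have "smult (lead_coeff F) P = P' + ?M * F"
    unfolding P'_def by simp
  ultimately show ?thesis
    using M P' by blast
qed

lemma pseudo_division:
  assumes F: "poly_over R F" "F \<noteq> 0" and P: "poly_over R P"
  shows "\<exists>e Q Rm. poly_over R Q \<and> poly_over R Rm \<and> smult (lead_coeff F ^ e) P = Q * F + Rm
            \<and> (Rm = 0 \<or> degree Rm < degree F)"
  using P
proof (induction "degree P" arbitrary: P rule: less_induct)
  case less
  show ?case
  proof (cases "P = 0 \<or> degree P < degree F")
    case True
    then show ?thesis
      using less.prems by (intro exI[of _ 0] exI[of _ 0] exI[of _ P]) (auto intro: poly_over_0)
  next
    case False
    let ?b = "lead_coeff F"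
    obtain M P' where M: "poly_over R M" "poly_over R P'" "smult ?b P = P' + M * F"
        "P' = 0 \<or> degree P' < degree P"
      using division_step[OF F(1) less.prems] False by auto
    have "\<exists>e Q Rm. poly_over R Q \<and> poly_over R Rm \<and> smult (?b ^ e) P' = Q * F + Rm
            \<and> (Rm = 0 \<or> degree Rm < degree F)"
    proof (cases "P' = 0")
      case True
      then show ?thesis
        by (intro exI[of _ 0] exI[of _ 0] exI[of _ 0]) (simp add: poly_over_0)
    qed (use less.hyps M in auto)
    then obtain e Q Rm where QR: "poly_over R Q" "poly_over R Rm" "smult (?b ^ e) P' = Q * F + Rm"
        "Rm = 0 \<or> degree Rm < degree F"
      by blast
    have "smult (?b ^ Suc e) P = smult (?b ^ e) (smult ?b P)"
      by (simp add: mult.commute)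
    also have "\<dots> = (Q + smult (?b ^ e) M) * F + Rm"
      using QR(3) by (simp add: M(3) smult_add_right algebra_simps)
    finally have eq: "smult (?b ^ Suc e) P = (Q + smult (?b ^ e) M) * F + Rm" .
    have "poly_over R (Q + smult (?b ^ e) M)"
      using QR(1) M(1) F(1) by (intro poly_over_add poly_over_smult subring_power[OF R])
        (auto simp: poly_over_def)
    with eq QR(2,4) show ?thesis
      by (intro exI[of _ "Suc e"] exI[of _ "Q + smult (?b ^ e) M"] exI[of _ Rm]) simp
  qed
qed

end

inductive_set gen_ring :: "complex set \<Rightarrow> complex set" for S where
  gen: "x \<in> S \<Longrightarrow> x \<in> gen_ring S"
| one: "1 \<in> gen_ring S"
| add: "x \<in> gen_ring S \<Longrightarrow> y \<in> gen_ring S \<Longrightarrow> x + y \<in> gen_ring S"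
| neg: "x \<in> gen_ring S \<Longrightarrow> - x \<in> gen_ring S"
| mul: "x \<in> gen_ring S \<Longrightarrow> y \<in> gen_ring S \<Longrightarrow> x * y \<in> gen_ring S"

lemma subring_gen_ring: "is_subring (gen_ring S)"
proof -
  have "0 \<in> gen_ring S"
    using gen_ring.add[OF gen_ring.one gen_ring.neg[OF gen_ring.one]] by simp
  then show ?thesis
    unfolding is_subring_def by (auto intro: gen_ring.intros)
qed

lemma gen_ring_empty: "gen_ring {} \<subseteq> \<int>"
proof
  fix x assume "x \<in> gen_ring {}"
  then show "x \<in> \<int>"
    by induction auto
qed

lemma gen_ring_insert:
  assumes "x \<in> gen_ring (insert t S)"
  shows "\<exists>P. poly_over (gen_ring S) P \<and> x = poly P t"
  using assms
proof induction
  case (gen x)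
  then show ?case
  proof
    assume "x = t"
    then show ?thesis
      by (intro exI[of _ "monom 1 1"])
        (simp add: poly_over_monom subring_gen_ring subring_1 poly_monom)
  next
    assume "x \<in> S"
    then show ?thesis
      by (intro exI[of _ "[:x:]"]) (simp add: poly_over_const subring_gen_ring gen_ring.gen)
  qed
next
  case one
  then show ?case
    by (intro exI[of _ 1]) (simp add: poly_over_1 subring_gen_ring)
next
  case (add x y)
  then show ?case
    by (metis poly_over_add poly_add subring_gen_ring)
next
  case (neg x)
  then show ?case
    by (metis poly_over_uminus poly_minus subring_gen_ring)
next
  case (mul x y)
  then show ?case
    by (metis poly_over_mult poly_mult subring_gen_ring)
qed

section \<open>Primes dividing powers in finitely generated subrings\<close>

text \<open>The primes \<open>p\<close> that divide some power of \<open>a\<close> inside \<open>R\<close>; equivalently, the primes that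
  become invertible once \<open>1/a\<close> is adjoined to \<open>R\<close>.\<close>

definition power_prime_divisors :: "complex set \<Rightarrow> complex \<Rightarrow> nat set" where
  "power_prime_divisors R a = {p. prime p \<and> (\<exists>N. \<exists>b\<in>R. a ^ N = of_nat p * b)}"

lemma power_prime_divisors_mono:
  "R \<subseteq> R' \<Longrightarrow> power_prime_divisors R a \<subseteq> power_prime_divisors R' a"
  unfolding power_prime_divisors_def by blast

text \<open>Base case: over the integers, a prime dividing a power of \<open>z\<close> divides \<open>z\<close>.\<close>

lemma finite_power_prime_divisors_Ints:
  assumes "a \<in> \<int>" "a \<noteq> 0"
  shows "finite (power_prime_divisors \<int> a)"
proof -
  obtain z where z: "a = of_int z"
    using assms(1) by (elim Ints_cases)
  have "power_prime_divisors \<int> a \<subseteq> {p. p dvd nat \<bar>z\<bar>}"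
  proof
    fix p assume "p \<in> power_prime_divisors \<int> a"
    then obtain N b where p: "prime p" "b \<in> \<int>" "a ^ N = of_nat p * b"
      unfolding power_prime_divisors_def by blast
    obtain w where "b = of_int w"
      using p(2) by (elim Ints_cases)
    then have "(of_int (z ^ N) :: complex) = of_int (int p * w)"
      using p(3) z by simp
    then have "int p dvd z ^ N"
      unfolding of_int_eq_iff by simp
    moreover have "prime (int p)"
      using p(1) by simp
    ultimately have "int p dvd z"
      using prime_dvd_power_int by metis
    then have "p dvd nat \<bar>z\<bar>"
      by (metis dvd_abs_iff int_dvd_int_iff int_nat_eq abs_ge_zero nat_0_le)
    then show "p \<in> {p. p dvd nat \<bar>z\<bar>}"
      by simp
  qed
  moreover have "finite {p. p dvd nat \<bar>z\<bar>}"
    by (rule finite_divisors_nat) (use assms(2) z in simp)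
  ultimately show ?thesis
    by (rule finite_subset)
qed

definition min_annihilator :: "complex set \<Rightarrow> complex \<Rightarrow> complex poly \<Rightarrow> bool" where
  "min_annihilator R t F \<longleftrightarrow> poly_over R F \<and> F \<noteq> 0 \<and> poly F t = 0 \<and>
     (\<forall>P. poly_over R P \<longrightarrow> P \<noteq> 0 \<longrightarrow> poly P t = 0 \<longrightarrow> degree F \<le> degree P)"

lemma min_annihilator_exists:
  assumes "poly_over R P" "P \<noteq> 0" "poly P t = 0"
  shows "\<exists>F. min_annihilator R t F"
proof -
  let ?annihilates = "\<lambda>P. poly_over R P \<and> P \<noteq> 0 \<and> poly P t = 0"
  from ex_has_least_nat[of ?annihilates P degree] assms
  obtain F where "?annihilates F" "\<forall>Q. ?annihilates Q \<longrightarrow> degree F \<le> degree Q"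
    by blast
  then show ?thesis
    unfolding min_annihilator_def by blast
qed

lemma min_annihilator_degree:
  assumes "min_annihilator R t F"
  shows "degree F > 0"
proof (rule ccontr)
  assume "\<not> degree F > 0"
  then have const: "F = [:coeff F 0:]"
    by (simp add: degree_0_id)
  then have "poly F t = coeff F 0"
    by (metis poly_const_conv)
  with const show False
    using assms unfolding min_annihilator_def by auto
qed

text \<open>If \<open>deg F \<le> deg A\<close>, pseudo-divide \<open>A\<close> by \<open>F\<close>: the remainder takes the value
  \<open>\<beta>^e A(t)\<close>.\<close>

lemma reduce_by_annihilator:
  assumes R: "is_subring R" and F: "min_annihilator R t F"
    and A: "poly_over R A" "poly A t \<noteq> 0" "degree F \<le> degree A"
  shows "\<exists>A' W. poly_over R A' \<and> poly_over R W \<and> degree A' < degree A \<and>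
     poly A' t \<noteq> 0 \<and> poly A' t = poly A t * poly W t"
proof -
  have F_over: "poly_over R F" "F \<noteq> 0" "poly F t = 0"
    using F unfolding min_annihilator_def by auto
  obtain e Q Rm where QR: "poly_over R Q" "poly_over R Rm"
      "smult (lead_coeff F ^ e) A = Q * F + Rm" "Rm = 0 \<or> degree Rm < degree F"
    using pseudo_division[OF R F_over(1,2) A(1)] by blast
  have at_t: "poly Rm t = poly A t * poly [:lead_coeff F ^ e:] t"
    using arg_cong[OF QR(3), of "\<lambda>P. poly P t"] F_over(3) by (simp add: mult.commute)
  have "poly Rm t \<noteq> 0"
    using at_t A(2) F_over(2) by simp
  then have "degree Rm < degree A"
    using QR(4) A(3) by auto
  moreover have "poly_over R [:lead_coeff F ^ e:]"
    using F_over(1) by (intro poly_over_const[OF R] subring_power[OF R]) (simp add: poly_over_def)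
  ultimately show ?thesis
    using QR(2) at_t \<open>poly Rm t \<noteq> 0\<close> by blast
qed

text \<open>If \<open>deg A < deg F\<close>, pseudo-divide \<open>F\<close> by \<open>A\<close>: the remainder takes the value \<open>-Q(t) A(t)\<close>, and
  it cannot vanish at \<open>t\<close>, for then minimality of \<open>F\<close> would force \<open>F\<close> to be a multiple \<open>Q A\<close>
  with \<open>Q(t) = 0\<close> and \<open>deg Q < deg F\<close>.\<close>

lemma reduce_annihilator:
  assumes R: "is_subring R" and F: "min_annihilator R t F"
    and A: "poly_over R A" "poly A t \<noteq> 0" "degree A > 0" "degree A < degree F"
  shows "\<exists>A' W. poly_over R A' \<and> poly_over R W \<and> degree A' < degree A \<and>
     poly A' t \<noteq> 0 \<and> poly A' t = poly A t * poly W t"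
proof -
  have F_over: "poly_over R F" "F \<noteq> 0" "poly F t = 0"
    and minF: "\<And>P. poly_over R P \<Longrightarrow> P \<noteq> 0 \<Longrightarrow> poly P t = 0 \<Longrightarrow> degree F \<le> degree P"
    using F unfolding min_annihilator_def by auto
  have A0: "A \<noteq> 0"
    using A(2) by auto
  obtain e Q Rm where QR: "poly_over R Q" "poly_over R Rm"
      "smult (lead_coeff A ^ e) F = Q * A + Rm" "Rm = 0 \<or> degree Rm < degree A"
    using pseudo_division[OF R A(1) A0 F_over(1)] by blast
  have "0 = poly Q t * poly A t + poly Rm t"
    using arg_cong[OF QR(3), of "\<lambda>P. poly P t"] F_over(3) by simp
  then have at_t: "poly Rm t = poly A t * poly (- Q) t"
    by (simp add: eq_neg_iff_add_eq_0 add.commute mult.commute)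
  have "poly Rm t \<noteq> 0"
  proof
    assume Rm_t: "poly Rm t = 0"
    have "Rm = 0"
    proof (rule ccontr)
      assume "Rm \<noteq> 0"
      then show False
        using minF[OF QR(2) _ Rm_t] QR(4) A(4) by simp
    qed
    then have eqQ: "smult (lead_coeff A ^ e) F = Q * A"
      using QR(3) by simp
    then have Q0: "Q \<noteq> 0"
      using F_over(2) A0 by auto
    have "poly Q t = 0"
      using at_t Rm_t A(2) by simp
    then have "degree F \<le> degree Q"
      using minF[OF QR(1) Q0] by simp
    moreover have "degree F = degree Q + degree A"
      using eqQ Q0 A0 by (metis degree_mult_eq degree_smult_eq leading_coeff_0_iff power_not_zero)
    ultimately show False
      using A(3) by simp
  qed
  then have "degree Rm < degree A"
    using QR(4) by auto
  then show ?thesis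
    using QR(1,2) at_t \<open>poly Rm t \<noteq> 0\<close> poly_over_uminus[OF R] by blast
qed

lemma min_annihilator_inverse:
  assumes R: "is_subring R" and F: "min_annihilator R t F"
  shows "poly_over R A \<Longrightarrow> poly A t \<noteq> 0 \<Longrightarrow>
    \<exists>V \<gamma>. poly_over R V \<and> \<gamma> \<in> R \<and> \<gamma> \<noteq> 0 \<and> poly A t * poly V t = \<gamma>"
proof (induction "degree A" arbitrary: A rule: less_induct)
  case less
  show ?case
  proof (cases "degree A = 0")
    case True
    then have "poly A t = coeff A 0"
      by (metis degree_0_id poly_const_conv)
    then show ?thesis
      using less.prems poly_over_1[OF R] subring_1[OF R]
      by (intro exI[of _ 1] exI[of _ "coeff A 0"]) (auto simp: poly_over_def)
  next
    case False
    then obtain A' W where A': "poly_over R A'" "poly_over R W" "degree A' < degree A"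
        "poly A' t \<noteq> 0" "poly A' t = poly A t * poly W t"
      using reduce_by_annihilator[OF R F less.prems] reduce_annihilator[OF R F less.prems]
      by (cases "degree F \<le> degree A") auto
    then obtain V \<gamma> where V: "poly_over R V" "\<gamma> \<in> R" "\<gamma> \<noteq> 0" "poly A' t * poly V t = \<gamma>"
      using less.hyps by blast
    then show ?thesis
      using A'(2,5) poly_over_mult[OF R] by (intro exI[of _ "W * V"] exI[of _ \<gamma>]) (auto simp: mult.assoc)
  qed
qed

text \<open>A polynomial over \<open>R\<close> of degree below that of the minimal annihilator which takes a value
  \<open>z \<in> R\<close> at \<open>t\<close> is the constant \<open>z\<close>: otherwise \<open>P - z\<close> would be a smaller annihilator.\<close>

lemma min_annihilator_low_degree:
  assumes R: "is_subring R" and F: "min_annihilator R t F"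
    and P: "poly_over R P" "P = 0 \<or> degree P < degree F" and z: "z \<in> R" "poly P t = z"
  shows "coeff P 0 = z"
proof -
  let ?G = "P - [:z:]"
  have "poly_over R ?G"
    using P(1) z(1) by (intro poly_over_diff[OF R] poly_over_const[OF R])
  moreover have "poly ?G t = 0"
    using z(2) by simp
  moreover have "degree ?G < degree F"
    using P(2) min_annihilator_degree[OF F] degree_diff_le_max[of P "[:z:]"] by auto
  ultimately have "?G = 0"
    using F unfolding min_annihilator_def by (meson not_le)
  then show ?thesis
    by simp
qed

text \<open>Adjoining a transcendental element \<open>t\<close>: if \<open>p\<close> divides \<open>A(t)^N\<close> in \<open>R[t]\<close>, comparing
  leading coefficients of the polynomial identity \<open>A^N = p B\<close> shows that \<open>p\<close> divides a power of
  the leading coefficient of \<open>A\<close> in \<open>R\<close>.\<close>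

lemma power_prime_divisors_transcendental:
  assumes transc: "\<And>P. poly_over (gen_ring S) P \<Longrightarrow> poly P t = 0 \<Longrightarrow> P = 0"
    and A: "poly_over (gen_ring S) A"
  shows "power_prime_divisors (gen_ring (insert t S)) (poly A t)
           \<subseteq> power_prime_divisors (gen_ring S) (lead_coeff A)"
proof
  let ?R = "gen_ring S"
  have R: "is_subring ?R"
    by (rule subring_gen_ring)
  fix p assume "p \<in> power_prime_divisors (gen_ring (insert t S)) (poly A t)"
  then obtain N b where p: "prime p" "b \<in> gen_ring (insert t S)" "poly A t ^ N = of_nat p * b"
    unfolding power_prime_divisors_def by blast
  obtain B where B: "poly_over ?R B" "b = poly B t"
    using gen_ring_insert[OF p(2)] by blast
  have "poly_over ?R (A ^ N - smult (of_nat p) B)"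
    using A B(1) by (intro poly_over_diff[OF R] poly_over_power[OF R] poly_over_smult[OF R]
        subring_of_nat[OF R])
  moreover have "poly (A ^ N - smult (of_nat p) B) t = 0"
    using p(3) B(2) by simp
  ultimately have "A ^ N - smult (of_nat p) B = 0"
    by (rule transc)
  then have "A ^ N = smult (of_nat p) B"
    by simp
  then have "lead_coeff A ^ N = of_nat p * lead_coeff B"
    by (metis lead_coeff_power lead_coeff_smult)
  moreover have "lead_coeff B \<in> ?R"
    using B(1) by (simp add: poly_over_def)
  ultimately show "p \<in> power_prime_divisors ?R (lead_coeff A)"
    using p(1) unfolding power_prime_divisors_def by blast
qed

text \<open>Adjoining an algebraic element \<open>t\<close> with minimal annihilator \<open>F\<close> (leading coefficient \<open>\<beta>\<close>),
  where \<open>A(t) V(t) = \<gamma>\<close>: if \<open>A(t)^N = p B(t)\<close>, pseudo-dividing \<open>B V^N\<close> by \<open>F\<close> leaves a remainder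
  \<open>Rm\<close> with \<open>p Rm(t) = \<beta>^e \<gamma>^N\<close>; by minimality \<open>p Rm - \<beta>^e \<gamma>^N\<close> is the zero polynomial, so \<open>p\<close>
  divides \<open>\<beta>^e \<gamma>^N\<close> and hence a power of \<open>\<beta> \<gamma>\<close> in \<open>R\<close>.\<close>

lemma power_prime_divisors_algebraic:
  assumes F: "min_annihilator (gen_ring S) t F"
    and A: "poly_over (gen_ring S) A" and V: "poly_over (gen_ring S) V"
    and \<gamma>: "\<gamma> \<in> gen_ring S" "poly A t * poly V t = \<gamma>"
  shows "power_prime_divisors (gen_ring (insert t S)) (poly A t)
           \<subseteq> power_prime_divisors (gen_ring S) (lead_coeff F * \<gamma>)"
proof
  let ?R = "gen_ring S" and ?\<beta> = "lead_coeff F"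
  have R: "is_subring ?R"
    by (rule subring_gen_ring)
  have F_over: "poly_over ?R F" "F \<noteq> 0" "poly F t = 0"
    using F unfolding min_annihilator_def by auto
  have \<beta>: "?\<beta> \<in> ?R"
    using F_over(1) by (simp add: poly_over_def)
  fix p assume "p \<in> power_prime_divisors (gen_ring (insert t S)) (poly A t)"
  then obtain N b where p: "prime p" "b \<in> gen_ring (insert t S)" "poly A t ^ N = of_nat p * b"
    unfolding power_prime_divisors_def by blast
  obtain B where B: "poly_over ?R B" "b = poly B t"
    using gen_ring_insert[OF p(2)] by blast
  obtain e Q Rm where QR: "poly_over ?R Q" "poly_over ?R Rm"
      "smult (?\<beta> ^ e) (B * V ^ N) = Q * F + Rm" "Rm = 0 \<or> degree Rm < degree F"
    using pseudo_division[OF R F_over(1,2) poly_over_mult[OF R B(1) poly_over_power[OF R V]]] by blast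
  have Rm_t: "poly Rm t = ?\<beta> ^ e * (b * poly V t ^ N)"
    using arg_cong[OF QR(3), of "\<lambda>P. poly P t"] F_over(3) B(2) by simp
  have \<gamma>N: "\<gamma> ^ N = of_nat p * b * poly V t ^ N"
    using \<gamma>(2) p(3) by (metis power_mult_distrib)
  have "coeff (smult (of_nat p) Rm) 0 = ?\<beta> ^ e * \<gamma> ^ N"
  proof (rule min_annihilator_low_degree[OF R F])
    show "poly_over ?R (smult (of_nat p) Rm)"
      using QR(2) by (intro poly_over_smult[OF R] subring_of_nat[OF R])
    show "smult (of_nat p) Rm = 0 \<or> degree (smult (of_nat p) Rm) < degree F"
      using QR(4) degree_smult_le[of "of_nat p" Rm] by auto
    show "?\<beta> ^ e * \<gamma> ^ N \<in> ?R"
      using \<beta> \<gamma>(1) by (intro subring_mult[OF R] subring_power[OF R])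
    show "poly (smult (of_nat p) Rm) t = ?\<beta> ^ e * \<gamma> ^ N"
      using Rm_t \<gamma>N by (simp add: algebra_simps)
  qed
  then have r0: "of_nat p * coeff Rm 0 = ?\<beta> ^ e * \<gamma> ^ N"
    by simp
  have "(?\<beta> * \<gamma>) ^ (e + N) = (?\<beta> ^ e * \<gamma> ^ N) * (?\<beta> ^ N * \<gamma> ^ e)"
    by (simp add: power_add power_mult_distrib ac_simps)
  also have "\<dots> = of_nat p * (coeff Rm 0 * ?\<beta> ^ N * \<gamma> ^ e)"
    by (subst r0[symmetric]) (simp add: ac_simps)
  finally have "(?\<beta> * \<gamma>) ^ (e + N) = of_nat p * (coeff Rm 0 * ?\<beta> ^ N * \<gamma> ^ e)" .
  moreover have "coeff Rm 0 * ?\<beta> ^ N * \<gamma> ^ e \<in> ?R"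
    using QR(2) \<beta> \<gamma>(1) by (auto simp: poly_over_def intro!: subring_mult[OF R] subring_power[OF R])
  ultimately show "p \<in> power_prime_divisors ?R (?\<beta> * \<gamma>)"
    using p(1) unfolding power_prime_divisors_def by blast
qed

theorem finite_power_prime_divisors:
  assumes "finite S"
  shows "a \<in> gen_ring S \<Longrightarrow> a \<noteq> 0 \<Longrightarrow> finite (power_prime_divisors (gen_ring S) a)"
  using assms
proof (induction S arbitrary: a rule: finite_induct)
  case empty
  have "finite (power_prime_divisors \<int> a)"
    using empty.prems gen_ring_empty by (intro finite_power_prime_divisors_Ints) auto
  then show ?case
    by (rule finite_subset[OF power_prime_divisors_mono[OF gen_ring_empty]])
next
  case (insert t S)
  let ?R = "gen_ring S"
  have R: "is_subring ?R"
    by (rule subring_gen_ring)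
  obtain A where A: "poly_over ?R A" "a = poly A t"
    using gen_ring_insert[OF insert.prems(1)] by blast
  show ?case
  proof (cases "\<forall>P. poly_over ?R P \<longrightarrow> poly P t = 0 \<longrightarrow> P = 0")
    case True
    have "lead_coeff A \<in> ?R" "lead_coeff A \<noteq> 0"
      using A insert.prems(2) by (auto simp: poly_over_def)
    then have "finite (power_prime_divisors ?R (lead_coeff A))"
      by (rule insert.IH)
    then show ?thesis
      unfolding A(2) using True
      by (intro finite_subset[OF power_prime_divisors_transcendental[OF _ A(1)]]) auto
  next
    case False
    then obtain F where F: "min_annihilator ?R t F"
      using min_annihilator_exists by blast
    obtain V \<gamma> where V: "poly_over ?R V" "\<gamma> \<in> ?R" "\<gamma> \<noteq> 0" "poly A t * poly V t = \<gamma>"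
      using min_annihilator_inverse[OF R F A(1)] A(2) insert.prems(2) by blast
    have "lead_coeff F * \<gamma> \<in> ?R" "lead_coeff F * \<gamma> \<noteq> 0"
      using F V(2,3) by (auto simp: min_annihilator_def poly_over_def intro: subring_mult[OF R])
    then have "finite (power_prime_divisors ?R (lead_coeff F * \<gamma>))"
      by (rule insert.IH)
    then show ?thesis
      unfolding A(2) by (rule finite_subset[OF power_prime_divisors_algebraic[OF F A(1) V(1,2,4)]])
  qed
qed

section \<open>Infinitely many primes congruent to 1 modulo k\<close>

definition primitive_roots :: "nat \<Rightarrow> complex set" where
  "primitive_roots k = {z. z ^ k = 1 \<and> (\<forall>j. 0 < j \<longrightarrow> j < k \<longrightarrow> z ^ j \<noteq> 1)}"

definition cyclotomic :: "nat \<Rightarrow> complex poly" where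
  "cyclotomic k = (\<Prod>z\<in>primitive_roots k. [:-z, 1:])"

lemma finite_primitive_roots: "k > 0 \<Longrightarrow> finite (primitive_roots k)"
  by (rule finite_subset[of _ "{z. z ^ k = 1}"]) (auto simp: primitive_roots_def intro: finite_roots_unity)

lemma primitive_roots_disjoint:
  "d1 > 0 \<Longrightarrow> d2 > 0 \<Longrightarrow> d1 \<noteq> d2 \<Longrightarrow> primitive_roots d1 \<inter> primitive_roots d2 = {}"
  unfolding primitive_roots_def by (auto dest: nat_neq_iff[THEN iffD1])

lemma primitive_roots_nonempty:
  assumes "k > 0"
  shows "primitive_roots k \<noteq> {}"
proof -
  let ?\<zeta> = "\<lambda>j. cis (2 * pi * real j / real k)"
  have inj: "inj_on ?\<zeta> {..<k}"
    using bij_betw_roots_unity[OF assms] by (simp add: bij_betw_def)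
  have pow: "?\<zeta> 1 ^ j = ?\<zeta> j" for j
    by (simp add: DeMoivre mult_ac)
  have "?\<zeta> 1 \<in> primitive_roots k"
    unfolding primitive_roots_def
  proof (intro CollectI conjI allI impI)
    show "?\<zeta> 1 ^ k = 1"
      using pow[of k] assms by simp
  next
    fix j assume j: "0 < j" "j < k"
    have "?\<zeta> j \<noteq> ?\<zeta> 0"
      using inj j assms unfolding inj_on_def by (metis lessThan_iff neq0_conv)
    then show "?\<zeta> 1 ^ j \<noteq> 1"
      using pow by simp
  qed
  then show ?thesis
    by blast
qed

lemma roots_of_unity_by_order:
  assumes k: "k > 0"
  shows "{z::complex. z ^ k = 1} = (\<Union>d\<in>{d. d dvd k}. primitive_roots d)"
proof
  show "{z. z ^ k = 1} \<subseteq> (\<Union>d\<in>{d. d dvd k}. primitive_roots d)"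
  proof
    fix z :: complex assume z: "z \<in> {z. z ^ k = 1}"
    define d where "d = (LEAST j. 0 < j \<and> z ^ j = 1)"
    have d: "0 < d \<and> z ^ d = 1"
      unfolding d_def by (rule LeastI[of _ k]) (use z k in auto)
    have d_least: "\<not> (0 < j \<and> z ^ j = 1)" if "j < d" for j
      using that unfolding d_def by (rule not_less_Least)
    have "z ^ k = z ^ (d * (k div d) + k mod d)"
      by simp
    also have "\<dots> = (z ^ d) ^ (k div d) * z ^ (k mod d)"
      by (simp only: power_add power_mult)
    finally have "z ^ (k mod d) = 1"
      using z d by simp
    then have "d dvd k"
      using d_least[of "k mod d"] d by (auto simp: dvd_eq_mod_eq_0)
    moreover have "z \<in> primitive_roots d"
      unfolding primitive_roots_def using d d_least by auto
    ultimately show "z \<in> (\<Union>d\<in>{d. d dvd k}. primitive_roots d)"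
      by blast
  qed
  show "(\<Union>d\<in>{d. d dvd k}. primitive_roots d) \<subseteq> {z. z ^ k = 1}"
  proof safe
    fix d z assume "d dvd k" "z \<in> primitive_roots d"
    then obtain m where "k = d * m" "z ^ d = 1"
      by (auto simp: primitive_roots_def)
    then show "z ^ k = 1"
      by (simp add: power_mult)
  qed
qed

text \<open>\<open>X^k - 1\<close> is monic and has no repeated roots (its derivative \<open>k X^(k-1)\<close> vanishes only at \<open>0\<close>).\<close>

lemma power_minus_one_rsquarefree:
  assumes k: "k > 0"
  shows "rsquarefree (monom (1::complex) k - 1)" "lead_coeff (monom (1::complex) k - 1) = 1"
proof -
  let ?p = "monom (1::complex) k - 1"
  show "rsquarefree ?p"
    unfolding rsquarefree_roots
  proof (intro allI notI)
    fix a assume a: "poly ?p a = 0 \<and> poly (pderiv ?p) a = 0"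
    then have "of_nat k * a ^ (k - 1) = 0"
      by (simp add: pderiv_diff pderiv_monom poly_monom)
    then have "a = 0"
      using k by simp
    then show False
      using a k by (simp add: poly_monom power_0_left)
  qed
  have "?p = -1 + monom 1 k"
    by simp
  moreover have "lead_coeff (-1 + monom (1::complex) k) = lead_coeff (monom (1::complex) k)"
    using k by (intro lead_coeff_add_le) (simp add: degree_monom_eq)
  ultimately show "lead_coeff ?p = 1"
    by (simp only: lead_coeff_monom)
qed

text \<open>The factorisation \<open>X^k - 1 = \<Prod>\<^sub>d\<^sub>|\<^sub>k \<Phi>\<^sub>d\<close>: being monic and squarefree, \<open>X^k - 1\<close> is the
  product of \<open>X - z\<close> over its roots, the \<open>k\<close>-th roots of unity, which are grouped by their order.\<close>

lemma power_minus_one_cyclotomic: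
  assumes k: "k > 0"
  shows "monom 1 k - 1 = (\<Prod>d\<in>{d. d dvd k}. cyclotomic d)"
proof -
  let ?p = "monom (1::complex) k - 1"
  have "?p = smult (lead_coeff ?p) (\<Prod>z|poly ?p z = 0. [:-z, 1:])"
    using complex_poly_decompose_rsquarefree[OF power_minus_one_rsquarefree(1)[OF k]] by simp
  also have "\<dots> = (\<Prod>z\<in>{z. z ^ k = 1}. [:-z, 1:])"
  proof -
    have "{z. poly ?p z = 0} = {z. z ^ k = 1}"
      by (simp add: poly_monom)
    then show ?thesis
      by (simp only: power_minus_one_rsquarefree(2)[OF k] smult_1_left)
  qed
  also have "\<dots> = (\<Prod>d\<in>{d. d dvd k}. cyclotomic d)"
    unfolding roots_of_unity_by_order[OF k] cyclotomic_def
  proof (rule prod.UNION_disjoint)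
    show "finite {d. d dvd k}"
      using k by simp
    show "\<forall>d\<in>{d. d dvd k}. finite (primitive_roots d)"
      using k by (auto intro!: finite_primitive_roots intro: Nat.gr0I)
    show "\<forall>i\<in>{d. d dvd k}. \<forall>j\<in>{d. d dvd k}. i \<noteq> j \<longrightarrow> primitive_roots i \<inter> primitive_roots j = {}"
    proof (intro ballI impI)
      fix i j assume "i \<in> {d. d dvd k}" "j \<in> {d. d dvd k}" "i \<noteq> j"
      then show "primitive_roots i \<inter> primitive_roots j = {}"
        using k by (intro primitive_roots_disjoint) (auto intro: Nat.gr0I)
    qed
  qed
  finally show ?thesis .
qed

lemma lead_coeff_cyclotomic: "lead_coeff (cyclotomic k) = 1"
  unfolding cyclotomic_def by (simp add: lead_coeff_prod)

lemma poly_over_Ints_monic_quotient: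
  assumes P: "poly_over \<int> P" and B: "poly_over \<int> B" "lead_coeff B = 1" and PQ: "P = Q * B"
  shows "poly_over \<int> Q"
proof -
  have B0: "B \<noteq> 0"
    using B(2) by auto
  obtain e Q' Rm where QR: "poly_over \<int> Q'" "poly_over \<int> Rm" "smult (lead_coeff B ^ e) P = Q' * B + Rm"
      "Rm = 0 \<or> degree Rm < degree B"
    using pseudo_division[OF subring_Ints B(1) B0 P] by blast
  have eq: "(Q - Q') * B = Rm"
    using QR(3) B(2) PQ by (simp add: algebra_simps)
  have "Q = Q'"
  proof (rule ccontr)
    assume "Q \<noteq> Q'"
    then have "degree Rm = degree (Q - Q') + degree B" "Rm \<noteq> 0"
      using eq B0 degree_mult_eq[of "Q - Q'" B] by auto
    then show False
      using QR(4) by simp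
  qed
  then show ?thesis
    using QR(1) by simp
qed

text \<open>Cyclotomic polynomials have integer coefficients: by strong induction, \<open>\<Phi>\<^sub>k\<close> is the quotient
  of \<open>X^k - 1\<close> by the monic integer polynomial \<open>\<Prod>\<^sub>d\<^sub>|\<^sub>k\<^sub>,\<^sub>d\<^sub><\<^sub>k \<Phi>\<^sub>d\<close>.\<close>

lemma poly_over_Ints_cyclotomic: "k > 0 \<Longrightarrow> poly_over \<int> (cyclotomic k)"
proof (induction k rule: less_induct)
  case (less k)
  let ?B = "\<Prod>d\<in>{d. d dvd k \<and> d \<noteq> k}. cyclotomic d"
  have divisors: "{d. d dvd k} = insert k {d. d dvd k \<and> d \<noteq> k}"
    by auto
  have "monom 1 k - 1 = cyclotomic k * ?B"
    using power_minus_one_cyclotomic[OF less.prems] less.prems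
    unfolding divisors by (subst (asm) prod.insert) auto
  moreover have "poly_over \<int> ?B"
  proof (rule poly_over_prod[OF subring_Ints])
    fix d assume "d \<in> {d. d dvd k \<and> d \<noteq> k}"
    then have "d < k" "d > 0"
      using less.prems by (auto intro: Nat.gr0I dest: dvd_imp_le)
    then show "poly_over \<int> (cyclotomic d)"
      by (rule less.IH)
  qed
  moreover have "poly_over \<int> (monom 1 k - 1)"
    by (intro poly_over_diff poly_over_monom poly_over_1 subring_Ints) auto
  moreover have "lead_coeff ?B = 1"
    by (simp add: lead_coeff_prod lead_coeff_cyclotomic)
  ultimately show ?case
    using poly_over_Ints_monic_quotient by blast
qed

text \<open>At a real point \<open>x \<ge> 3\<close>, each factor \<open>x - z\<close> of \<open>\<Phi>\<^sub>k\<close> has modulus at least \<open>2\<close>.\<close>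

lemma cyclotomic_norm_ge_2:
  assumes k: "k > 0" and x: "x \<ge> 3"
  shows "norm (poly (cyclotomic k) (of_real x)) \<ge> 2"
proof -
  have "norm (poly (cyclotomic k) (of_real x)) = (\<Prod>z\<in>primitive_roots k. norm (of_real x - z))"
    unfolding cyclotomic_def poly_prod by (simp add: prod_norm)
  also have "\<dots> \<ge> (\<Prod>z\<in>primitive_roots k. 2)"
  proof (rule prod_mono)
    fix z assume "z \<in> primitive_roots k"
    then have "norm z ^ k = 1"
      by (simp add: primitive_roots_def flip: norm_power)
    then have "norm z = 1"
      using k power_eq_iff_eq_base[of k "norm z" 1] by simp
    moreover have "norm (of_real x :: complex) - norm z \<le> norm (of_real x - z)"
      by (rule norm_triangle_ineq2)
    ultimately show "0 \<le> (2::real) \<and> 2 \<le> norm (of_real x - z)"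
      using x by simp
  qed
  finally have "norm (poly (cyclotomic k) (of_real x)) \<ge> 2 ^ card (primitive_roots k)"
    by simp
  moreover have "card (primitive_roots k) \<ge> 1"
    using finite_primitive_roots[OF k] primitive_roots_nonempty[OF k]
    by (simp add: Suc_le_eq card_gt_0_iff)
  ultimately show ?thesis
    using power_increasing[of 1 "card (primitive_roots k)" "2::real"] by simp
qed

definition cyclotomic_at :: "nat \<Rightarrow> int \<Rightarrow> int" where
  "cyclotomic_at k x = (THE z. poly (cyclotomic k) (of_int x) = of_int z)"

lemma poly_over_Ints_at_int: "poly_over \<int> P \<Longrightarrow> poly P (of_int x) \<in> \<int>"
  by (rule poly_over_poly[OF subring_Ints]) auto

text \<open>\<open>cyclotomic_at\<close> indeed computes the value of \<open>\<Phi>\<^sub>k\<close>, as \<open>\<Phi>\<^sub>k\<close> has integer coefficients.\<close>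

lemma of_int_cyclotomic_at:
  assumes "k > 0"
  shows "of_int (cyclotomic_at k x) = poly (cyclotomic k) (of_int x)"
proof -
  obtain z where z: "poly (cyclotomic k) (of_int x) = of_int z"
    using poly_over_Ints_at_int[OF poly_over_Ints_cyclotomic[OF assms], of x] by (elim Ints_cases)
  then have "cyclotomic_at k x = z"
    unfolding cyclotomic_at_def by (rule the_equality) (simp add: z)
  then show ?thesis
    by (simp add: z)
qed

lemma power_minus_one_cyclotomic_at:
  assumes "m > 0"
  shows "x ^ m - 1 = (\<Prod>d\<in>{d. d dvd m}. cyclotomic_at d x)"
proof -
  have "(of_int (x ^ m - 1) :: complex) = poly (monom 1 m - 1) (of_int x)"
    by (simp add: poly_monom)
  also have "\<dots> = (\<Prod>d\<in>{d. d dvd m}. of_int (cyclotomic_at d x))"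
    unfolding power_minus_one_cyclotomic[OF assms] poly_prod using assms
    by (intro prod.cong refl of_int_cyclotomic_at[symmetric]) (auto intro: Nat.gr0I)
  finally have "(of_int (x ^ m - 1) :: complex) = of_int (\<Prod>d\<in>{d. d dvd m}. cyclotomic_at d x)"
    by (simp add: of_int_prod)
  then show ?thesis
    by (simp only: of_int_eq_iff)
qed

lemma cyclotomic_at_ge_2:
  assumes "k > 0" "x \<ge> 3"
  shows "\<bar>cyclotomic_at k x\<bar> \<ge> 2"
proof -
  have "norm (poly (cyclotomic k) (of_real (of_int x))) \<ge> 2"
    using assms by (intro cyclotomic_norm_ge_2) auto
  then have "norm (of_int (cyclotomic_at k x) :: complex) \<ge> 2"
    using of_int_cyclotomic_at[OF assms(1)] by simp
  then show ?thesis
    by (simp only: norm_of_int)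
qed

text \<open>If \<open>q\<close> divides both \<open>\<Phi>\<^sub>k(x)\<close> and \<open>\<Phi>\<^sub>e(x)\<close> for a proper divisor \<open>e\<close> of \<open>k\<close>, then \<open>x\<close> is a double
  root of \<open>X^k - 1\<close> modulo \<open>q\<close>, so \<open>q\<close> divides the derivative \<open>k x^(k-1)\<close>.\<close>

lemma cyclotomic_at_common_divisor:
  assumes k: "k > 0" and e: "e dvd k" "e \<noteq> k"
    and q: "q dvd cyclotomic_at k x" "q dvd cyclotomic_at e x"
  shows "q dvd int k * x ^ (k - 1)"
proof -
  define A where "A = {d. d dvd k}"
  define G where "G = (\<Prod>d\<in>A - {k} - {e}. cyclotomic d)"
  define H where "H = cyclotomic e * G"
  have finA: "finite A" and e0: "e > 0"
    using k e by (auto simp: A_def intro: Nat.gr0I)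
  have "monom 1 k - 1 = cyclotomic k * (\<Prod>d\<in>A - {k}. cyclotomic d)"
    unfolding power_minus_one_cyclotomic[OF k] A_def[symmetric] using finA
    by (rule prod.remove) (simp add: A_def)
  also have "(\<Prod>d\<in>A - {k}. cyclotomic d) = H"
    unfolding H_def G_def using finA e by (intro prod.remove) (auto simp: A_def)
  finally have split: "monom 1 k - 1 = cyclotomic k * H" .
  have G: "poly_over \<int> G"
    unfolding G_def using k
    by (intro poly_over_prod[OF subring_Ints] poly_over_Ints_cyclotomic) (auto simp: A_def intro: Nat.gr0I)
  then have H: "poly_over \<int> H"
    unfolding H_def using poly_over_Ints_cyclotomic[OF e0] by (intro poly_over_mult[OF subring_Ints])
  obtain h g c where hgc: "poly (pderiv H) (of_int x) = of_int h" "poly G (of_int x) = of_int g"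
      "poly (pderiv (cyclotomic k)) (of_int x) = of_int c"
    using poly_over_Ints_at_int[OF poly_over_pderiv[OF subring_Ints H]] poly_over_Ints_at_int[OF G]
      poly_over_Ints_at_int[OF poly_over_pderiv[OF subring_Ints poly_over_Ints_cyclotomic[OF k]]]
    by (metis Ints_cases)
  have deriv: "pderiv (monom 1 k - 1) = cyclotomic k * pderiv H + H * pderiv (cyclotomic k)"
    unfolding split by (rule pderiv_mult)
  have "(of_int (int k * x ^ (k - 1)) :: complex) = poly (pderiv (monom 1 k - 1)) (of_int x)"
    by (simp add: pderiv_diff pderiv_monom poly_monom)
  also have "\<dots> = poly (cyclotomic k) (of_int x) * of_int h
      + poly (cyclotomic e) (of_int x) * of_int g * of_int c"
    unfolding deriv using hgc by (simp add: H_def algebra_simps)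
  also have "\<dots> = of_int (cyclotomic_at k x * h + cyclotomic_at e x * g * c)"
    by (simp add: of_int_cyclotomic_at k e0)
  finally have "int k * x ^ (k - 1) = cyclotomic_at k x * h + cyclotomic_at e x * g * c"
    by (simp only: of_int_eq_iff)
  then show ?thesis
    using q by simp
qed

text \<open>Modulo a prime \<open>q\<close>, \<open>x^m \<equiv> 1\<close> exactly when \<open>q\<close> divides \<open>\<Phi>\<^sub>e(x)\<close> for some divisor \<open>e\<close> of \<open>m\<close>,
  by the factorisation of \<open>x^m - 1\<close>.\<close>

lemma cong_one_cyclotomic_at:
  fixes x q :: nat
  assumes m: "m > 0" and q: "prime q"
  shows "[x ^ m = 1] (mod q) \<longleftrightarrow> (\<exists>e. e dvd m \<and> int q dvd cyclotomic_at e (int x))"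
proof -
  have "[x ^ m = 1] (mod q) \<longleftrightarrow> [int (x ^ m) = int 1] (mod int q)"
    by (rule cong_int_iff[symmetric])
  also have "\<dots> \<longleftrightarrow> int q dvd int x ^ m - 1"
    by (simp add: cong_iff_dvd_diff)
  also have "\<dots> \<longleftrightarrow> int q dvd (\<Prod>e\<in>{e. e dvd m}. cyclotomic_at e (int x))"
    by (simp only: power_minus_one_cyclotomic_at[OF m])
  also have "\<dots> \<longleftrightarrow> (\<exists>e. e dvd m \<and> int q dvd cyclotomic_at e (int x))"
  proof -
    have "finite {e. e dvd m}" "prime (int q)"
      using m q by simp_all
    then show ?thesis
      by (simp add: prime_dvd_prod_iff)
  qed
  finally show ?thesis .
qed

text \<open>A prime factor \<open>q\<close> of \<open>\<Phi>\<^sub>k(x)\<close> divides \<open>x^k - 1\<close>, hence not \<open>x\<close>.\<close>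

lemma prime_divisor_cyclotomic_at_coprime:
  assumes k: "k > 0" and q: "prime q" "int q dvd cyclotomic_at k (int x)"
  shows "[x ^ k = 1] (mod q)" "\<not> q dvd x"
proof -
  show xk: "[x ^ k = 1] (mod q)"
    unfolding cong_one_cyclotomic_at[OF k q(1)] using q(2) by (intro exI[of _ k]) simp
  show "\<not> q dvd x"
  proof
    assume "q dvd x"
    moreover have "x dvd x ^ k"
      using k by simp
    ultimately have "[x ^ k = 0] (mod q)"
      unfolding cong_0_iff by (rule dvd_trans)
    then have "q dvd 1"
      using xk by (metis cong_0_iff cong_dvd_iff cong_sym)
    then show False
      using q(1) by simp
  qed
qed

text \<open>If moreover \<open>k\<close> divides \<open>x\<close>, then \<open>x\<close> has order exactly \<open>k\<close> modulo \<open>q\<close>: a smaller order \<open>d\<close>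
  would make \<open>q\<close> divide some \<open>\<Phi>\<^sub>e(x)\<close> with \<open>e\<close> a proper divisor of \<open>k\<close>, hence divide \<open>k x^(k-1)\<close>,
  hence divide \<open>x\<close>.\<close>

lemma prime_divisor_cyclotomic_at_order:
  assumes k: "k > 0" "k dvd x" and q: "prime q" "int q dvd cyclotomic_at k (int x)"
  shows "ord q x = k"
proof -
  note xk = prime_divisor_cyclotomic_at_coprime(1)[OF k(1) q]
    and q_not_x = prime_divisor_cyclotomic_at_coprime(2)[OF k(1) q]
  have qint: "prime (int q)"
    using q(1) by simp
  have "coprime q x"
    using q(1) q_not_x by (simp add: prime_imp_coprime)
  then have ord_pos: "ord q x > 0"
    using ord_eq_0[of q x] by simp
  have ord_dvd: "ord q x dvd k"
    using xk ord_divides[of x k q] by simp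
  show ?thesis
  proof (rule ccontr)
    assume "ord q x \<noteq> k"
    have "[x ^ ord q x = 1] (mod q)"
      by (rule ord)
    then obtain e where e: "e dvd ord q x" "int q dvd cyclotomic_at e (int x)"
      unfolding cong_one_cyclotomic_at[OF ord_pos q(1)] by blast
    have "e dvd k"
      using e(1) ord_dvd by (rule dvd_trans)
    moreover have "e \<noteq> k"
      using dvd_imp_le[OF e(1) ord_pos] dvd_imp_le[OF ord_dvd k(1)] \<open>ord q x \<noteq> k\<close> by auto
    ultimately have "int q dvd int k * int x ^ (k - 1)"
      by (rule cyclotomic_at_common_divisor[OF k(1) _ _ q(2) e(2)])
    then have "int q dvd int k \<or> int q dvd int x ^ (k - 1)"
      by (rule prime_dvd_multD[OF qint])
    then have "int q dvd int x"
    proof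
      assume "int q dvd int k"
      then show ?thesis
        using k(2) by (meson dvd_trans of_nat_dvd_iff)
    next
      assume "int q dvd int x ^ (k - 1)"
      then show ?thesis
        using qint by (rule prime_dvd_power[rotated])
    qed
    then show False
      using q_not_x by simp
  qed
qed

text \<open>Consequently \<open>k\<close> divides \<open>q - 1\<close>, by Fermat's little theorem.\<close>

lemma prime_divisor_cyclotomic_at:
  assumes k: "k > 0" "k dvd x" and q: "prime q" "int q dvd cyclotomic_at k (int x)"
  shows "k dvd q - 1 \<and> \<not> q dvd x"
proof -
  have q_not_x: "\<not> q dvd x"
    by (rule prime_divisor_cyclotomic_at_coprime(2)[OF k(1) q])
  then have "[x ^ (q - 1) = 1] (mod q)"
    by (rule fermat_theorem[OF q(1)])
  then have "ord q x dvd q - 1"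
    using ord_divides[of x "q - 1" q] by simp
  with q_not_x show ?thesis
    using prime_divisor_cyclotomic_at_order[OF k q] by simp
qed

lemma prime_factor_cyclotomic_at:
  assumes k: "k > 0" and x: "x \<ge> 3"
  shows "\<exists>q. prime q \<and> int q dvd cyclotomic_at k x"
proof -
  have big: "\<bar>cyclotomic_at k x\<bar> \<ge> 2"
    by (rule cyclotomic_at_ge_2[OF k x])
  have nonzero: "cyclotomic_at k x \<noteq> 0"
    using big by auto
  have "\<not> is_unit (cyclotomic_at k x)"
  proof
    assume "is_unit (cyclotomic_at k x)"
    then have "\<bar>cyclotomic_at k x\<bar> \<le> 1"
      using dvd_imp_le_int[of 1 "cyclotomic_at k x"] by simp
    then show False
      using big by simp
  qed
  then obtain b where b: "b dvd cyclotomic_at k x" "prime b"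
    using prime_divisor_exists[OF nonzero] by blast
  then have "b = int (nat b)"
    by (simp add: prime_ge_0_int)
  with b show ?thesis
    by (intro exI[of _ "nat b"]) (metis prime_nat_iff_prime)
qed

text \<open>For \<open>x = 3 k D\<close>, any prime factor \<open>q\<close> of \<open>\<Phi>\<^sub>k(x)\<close> (which exists since \<open>|\<Phi>\<^sub>k(x)| \<ge> 2\<close>) satisfies
  \<open>q \<equiv> 1 (mod k)\<close> and does not divide \<open>D\<close>; so no finite set contains all such primes.\<close>

theorem infinite_primes_1_mod:
  fixes k :: nat
  assumes k: "k > 0"
  shows "infinite {q. prime q \<and> k dvd q - 1}"
proof
  assume fin: "finite {q. prime q \<and> k dvd q - 1}"
  define D where "D = (\<Prod>q\<in>{q. prime q \<and> k dvd q - 1}. q)"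
  define x where "x = 3 * k * D"
  have "D > 0"
    unfolding D_def by (rule prod_pos) (simp add: prime_gt_0_nat)
  then have "1 \<le> k * D"
    using k by (simp add: Suc_le_eq)
  then have "int x \<ge> 3"
    unfolding x_def by linarith
  then obtain q where q: "prime q" "int q dvd cyclotomic_at k (int x)"
    using prime_factor_cyclotomic_at[OF k] by blast
  have "k dvd x"
    unfolding x_def by simp
  from prime_divisor_cyclotomic_at[OF k this q] have "k dvd q - 1" "\<not> q dvd x"
    by auto
  have "q dvd D"
    unfolding D_def using fin q(1) \<open>k dvd q - 1\<close> by (intro dvd_prodI) auto
  then have "q dvd x"
    unfolding x_def by simp
  with \<open>\<not> q dvd x\<close> show False
    by contradiction
qed


corollary prime_1_mod_avoiding:
  fixes k :: nat
  assumes "k > 0" "finite F"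
  obtains q m where "prime q" "q \<notin> F" "m \<ge> 1" "q = m * k + 1"
proof -
  have "infinite ({q. prime q \<and> k dvd q - 1} - F)"
    by (rule Diff_infinite_finite[OF assms(2) infinite_primes_1_mod[OF assms(1)]])
  then obtain q where q: "prime q" "k dvd q - 1" "q \<notin> F"
    using infinite_imp_nonempty by blast
  define m where "m = (q - 1) div k"
  have "q \<ge> 2"
    using q(1) by (rule prime_ge_2_nat)
  then have qm: "q = m * k + 1"
    unfolding m_def using q(2) by simp
  then have "m \<ge> 1"
    using \<open>q \<ge> 2\<close> by (cases m) auto
  with q qm that show ?thesis
    by blast
qed

section \<open>The functional L on powers of f\<close>

definition fact_weight :: "(nat \<Rightarrow>\<^sub>0 nat) \<Rightarrow> nat" where
  "fact_weight a = (\<Prod>i\<in>Poly_Mapping.keys a. fact (Poly_Mapping.lookup a i))"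

lemma Lfun_fact_weight:
  "Lfun p = (\<Sum>a\<in>Poly_Mapping.keys p. Poly_Mapping.lookup p a * of_nat (fact_weight a))"
  unfolding Lfun_def fact_weight_def by (simp add: of_nat_prod)

lemma Lfun_add: "Lfun (g + h) = Lfun g + Lfun h"
  unfolding Lfun_fact_weight
  by (rule setsum_keys_plus_distrib[where f = "\<lambda>a v. v * of_nat (fact_weight a)"])
    (auto simp: algebra_simps)

lemma Lfun_single: "Lfun (Poly_Mapping.single a r) = r * of_nat (fact_weight a)"
  unfolding Lfun_fact_weight by simp

lemma Lfun_0: "Lfun 0 = 0"
  unfolding Lfun_def by simp

lemma prime_not_dvd_fact_weight:
  assumes "prime q" "\<And>i. Poly_Mapping.lookup a i < q"
  shows "\<not> q dvd fact_weight a"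
  unfolding fact_weight_def prime_dvd_prod_iff[OF finite_keys assms(1)]
  using assms by (auto simp: prime_dvd_fact_iff not_le)

inductive monomial_span :: "complex set \<Rightarrow> ((nat \<Rightarrow>\<^sub>0 nat) \<Rightarrow> bool) \<Rightarrow> cpoly \<Rightarrow> bool"
  for R P where
  zero: "monomial_span R P 0"
| monom: "P a \<Longrightarrow> r \<in> R \<Longrightarrow> monomial_span R P (Poly_Mapping.single a r)"
| add: "monomial_span R P g \<Longrightarrow> monomial_span R P h \<Longrightarrow> monomial_span R P (g + h)"

lemma monomial_span_sum:
  "(\<And>j. j \<in> J \<Longrightarrow> monomial_span R P (f j)) \<Longrightarrow> monomial_span R P (sum f J)"
  by (induction J rule: infinite_finite_induct) (auto intro: monomial_span.intros)

text \<open>Products: exponent vectors add, so a product of spans lies in the span of the sums.\<close>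

lemma monomial_span_mult:
  assumes R: "is_subring R" and g: "monomial_span R P g" and h: "monomial_span R Q h"
    and PQ: "\<And>a b. P a \<Longrightarrow> Q b \<Longrightarrow> S (a + b)"
  shows "monomial_span R S (g * h)"
  using g
proof induction
  case zero
  then show ?case
    by (simp add: monomial_span.zero)
next
  case (monom a r)
  show ?case
    using h
  proof induction
    case zero
    then show ?case
      by (simp add: monomial_span.zero)
  next
    case (monom b s)
    then show ?case
      using \<open>P a\<close> \<open>r \<in> R\<close> PQ by (simp add: mult_single monomial_span.monom subring_mult[OF R])
  next
    case (add h1 h2)
    then show ?case
      by (simp add: distrib_left monomial_span.add)
  qed
next
  case (add g1 g2)
  then show ?case
    by (simp add: distrib_right monomial_span.add)
qed

text \<open>If every monomial has \<open>i\<close>-th exponent at least \<open>q\<close>, then \<open>q!\<close>, and so \<open>q\<close>, divides every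
  weight; hence \<open>L\<close> takes the value \<open>q s\<close> with \<open>s \<in> R\<close>.\<close>

lemma Lfun_monomial_span_divisible:
  assumes R: "is_subring R" and q: "q > 0"
    and h: "monomial_span R (\<lambda>a. q \<le> Poly_Mapping.lookup a i) h"
  shows "\<exists>s\<in>R. Lfun h = of_nat q * s"
  using h
proof induction
  case zero
  then show ?case
    using subring_0[OF R] by (auto simp: Lfun_0)
next
  case (monom a r)
  have "i \<in> Poly_Mapping.keys a"
    using monom(1) q by (simp add: in_keys_iff)
  then have "fact (Poly_Mapping.lookup a i) dvd fact_weight a"
    unfolding fact_weight_def by (intro dvd_prodI) auto
  moreover have "q dvd fact (Poly_Mapping.lookup a i)"
    using monom(1) q by (intro dvd_fact) auto
  ultimately obtain w where "fact_weight a = q * w"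
    by (metis dvd_trans dvdE)
  then have "Lfun (Poly_Mapping.single a r) = of_nat q * (r * of_nat w)"
    by (simp add: Lfun_single)
  moreover have "r * of_nat w \<in> R"
    using monom(2) by (intro subring_mult[OF R] subring_of_nat[OF R])
  ultimately show ?case
    by blast
next
  case (add g h)
  then obtain s1 s2 where "s1 \<in> R" "Lfun g = of_nat q * s1" "s2 \<in> R" "Lfun h = of_nat q * s2"
    by blast
  then show ?case
    by (intro bexI[of _ "s1 + s2"]) (auto simp: Lfun_add algebra_simps intro: subring_add[OF R])
qed

lemma power_leading_term:
  assumes R: "is_subring R" and c: "c \<in> R"
    and g: "monomial_span R (\<lambda>a. Poly_Mapping.lookup K i < Poly_Mapping.lookup a i) g"
  shows "\<exists>E G. (\<forall>j. Poly_Mapping.lookup E j = m * Poly_Mapping.lookup K j) \<and>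
     (Poly_Mapping.single K c + g) ^ m = Poly_Mapping.single E (c ^ m) + G \<and>
     monomial_span R (\<lambda>a. m * Poly_Mapping.lookup K i < Poly_Mapping.lookup a i) G"
proof (induction m)
  case 0
  show ?case
    by (intro exI[of _ 0]) (simp add: monomial_span.zero)
next
  case (Suc m)
  let ?k = "Poly_Mapping.lookup K i"
  obtain E G where E: "\<forall>j. Poly_Mapping.lookup E j = m * Poly_Mapping.lookup K j"
    and EG: "(Poly_Mapping.single K c + g) ^ m = Poly_Mapping.single E (c ^ m) + G"
    and G: "monomial_span R (\<lambda>a. m * ?k < Poly_Mapping.lookup a i) G"
    using Suc.IH by blast
  let ?above = "\<lambda>a. Suc m * ?k < Poly_Mapping.lookup a i"
  define G' where "G' = Poly_Mapping.single K c * G + g * Poly_Mapping.single E (c ^ m) + g * G"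
  have "(Poly_Mapping.single K c + g) ^ Suc m
      = (Poly_Mapping.single K c + g) * (Poly_Mapping.single E (c ^ m) + G)"
    using EG by simp
  also have "\<dots> = Poly_Mapping.single (K + E) (c ^ Suc m) + G'"
    unfolding G'_def by (simp add: algebra_simps mult_single)
  finally have power: "(Poly_Mapping.single K c + g) ^ Suc m = Poly_Mapping.single (K + E) (c ^ Suc m) + G'" .
  have "monomial_span R ?above (Poly_Mapping.single K c * G)"
    by (rule monomial_span_mult[OF R monomial_span.monom[of "\<lambda>a. a = K", OF refl c] G])
      (auto simp: lookup_add)
  moreover have "monomial_span R ?above (g * Poly_Mapping.single E (c ^ m))"
    by (rule monomial_span_mult[OF R g monomial_span.monom[of "\<lambda>a. a = E", OF refl subring_power[OF R c]]])
      (auto simp: lookup_add E)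
  moreover have "monomial_span R ?above (g * G)"
    by (rule monomial_span_mult[OF R g G]) (auto simp: lookup_add)
  ultimately have "monomial_span R ?above G'"
    unfolding G'_def by (intro monomial_span.add)
  moreover have "\<forall>j. Poly_Mapping.lookup (K + E) j = Suc m * Poly_Mapping.lookup K j"
    using E by (simp add: lookup_add)
  ultimately show ?case
    using power by blast
qed

lemma Lfun_power_congruence:
  assumes R: "is_subring R" and c: "c \<in> R"
    and g: "monomial_span R (\<lambda>a. Poly_Mapping.lookup K i < Poly_Mapping.lookup a i) g"
    and K_max: "\<And>j. Poly_Mapping.lookup K j \<le> Poly_Mapping.lookup K i"
    and q: "prime q" "q = m * Poly_Mapping.lookup K i + 1"
  shows "\<exists>N s. \<not> q dvd N \<and> s \<in> R \<and>
    Lfun ((Poly_Mapping.single K c + g) ^ m) = c ^ m * of_nat N + of_nat q * s"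
proof -
  obtain E G where E: "\<forall>j. Poly_Mapping.lookup E j = m * Poly_Mapping.lookup K j"
    and EG: "(Poly_Mapping.single K c + g) ^ m = Poly_Mapping.single E (c ^ m) + G"
    and G: "monomial_span R (\<lambda>a. m * Poly_Mapping.lookup K i < Poly_Mapping.lookup a i) G"
    using power_leading_term[OF R c g] by blast
  have "monomial_span R (\<lambda>a. q \<le> Poly_Mapping.lookup a i) G"
    using G q(2) by (simp add: Suc_le_eq)
  then obtain s where s: "s \<in> R" "Lfun G = of_nat q * s"
    using Lfun_monomial_span_divisible[OF R prime_gt_0_nat[OF q(1)]] by blast
  have "Poly_Mapping.lookup E j < q" for j
    using E K_max[of j] q(2) by (simp add: le_imp_less_Suc mult_le_mono2)
  then have "\<not> q dvd fact_weight E"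
    by (rule prime_not_dvd_fact_weight[OF q(1)])
  moreover have "Lfun ((Poly_Mapping.single K c + g) ^ m) = c ^ m * of_nat (fact_weight E) + of_nat q * s"
    by (simp add: EG Lfun_add Lfun_single s(2))
  ultimately show ?thesis
    using s(1) by blast
qed

text \<open>From \<open>c^m N + q s = 0\<close> with \<open>q\<close> prime to \<open>N\<close>, a Bezout relation \<open>u N + v q = 1\<close> gives
  \<open>c^m = q (v c^m - u s)\<close>: the prime \<open>q\<close> divides a power of \<open>c\<close> in \<open>R\<close>.\<close>

lemma power_prime_divisor_of_relation:
  assumes R: "is_subring R" and c: "c \<in> R" and s: "s \<in> R"
    and q: "prime q" "\<not> q dvd N" and rel: "c ^ m * of_nat N + of_nat q * s = 0"
  shows "q \<in> power_prime_divisors R c"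
proof -
  have "coprime (int N) (int q)"
    using q by (metis coprime_commute coprime_int_iff prime_imp_coprime)
  then obtain u v where uv: "u * int N + v * int q = 1"
    using bezout_int[of "int N" "int q"] by auto
  have "c ^ m = c ^ m * (of_int u * of_nat N + of_int v * of_nat q)"
    using arg_cong[OF uv, of "of_int :: int \<Rightarrow> complex"] by simp
  also have "\<dots> = of_int u * (c ^ m * of_nat N) + of_nat q * (of_int v * c ^ m)"
    by (simp add: algebra_simps)
  also have "c ^ m * of_nat N = - (of_nat q * s)"
    using rel by (simp add: eq_neg_iff_add_eq_0)
  finally have "c ^ m = of_nat q * (of_int v * c ^ m - of_int u * s)"
    by (simp add: algebra_simps)
  moreover have "of_int v * c ^ m - of_int u * s \<in> R"
    using c s by (intro subring_diff[OF R] subring_mult[OF R] subring_of_int[OF R] subring_power[OF R])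
  ultimately show ?thesis
    using q(1) unfolding power_prime_divisors_def by blast
qed

text \<open>Take \<open>R\<close> generated by \<open>c\<close> and the \<open>c\<^sub>j\<close>, a prime \<open>q \<equiv> 1 (mod k\<^sub>1)\<close> that does not
  divide any power of \<open>c\<close> in \<open>R\<close>, and \<open>m = (q - 1)/k\<^sub>1\<close>.\<close>

theorem proposition4p10:
  fixes n d :: nat and K :: "nat \<Rightarrow>\<^sub>0 nat" and M :: "nat \<Rightarrow> (nat \<Rightarrow>\<^sub>0 nat)"
    and c :: complex and cs :: "nat \<Rightarrow> complex"
  assumes "n \<ge> 1"
    and "Poly_Mapping.keys K \<subseteq> {1..n}"
    and "Poly_Mapping.lookup K 1 \<ge> 1"
    and "\<forall>i\<in>{2..n}. Poly_Mapping.lookup K i \<le> Poly_Mapping.lookup K 1"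
    and "c \<noteq> 0"
    and "\<forall>j\<in>{1..d}. Poly_Mapping.keys (M j) \<subseteq> {1..n}"
    and "\<forall>j\<in>{1..d}. Poly_Mapping.lookup (M j) 1 \<ge> Poly_Mapping.lookup K 1 + 1"
  shows "\<exists>m\<ge>1. Lfun ((Poly_Mapping.single K c + (\<Sum>j=1..d. Poly_Mapping.single (M j) (cs j))) ^ m) \<noteq> 0"
proof (rule ccontr)
  assume vanish: "\<not> ?thesis"
  let ?k = "Poly_Mapping.lookup K 1"
  define R where "R = gen_ring (insert c (cs ` {1..d}))"
  have R: "is_subring R" and c: "c \<in> R"
    unfolding R_def by (auto intro: subring_gen_ring gen_ring.gen)
  have "finite (power_prime_divisors R c)"
    using c assms(5) unfolding R_def by (intro finite_power_prime_divisors) auto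
  moreover have "?k > 0"
    using assms(3) by simp
  ultimately obtain q m where q: "prime q" "q \<notin> power_prime_divisors R c" "m \<ge> 1" "q = m * ?k + 1"
    using prime_1_mod_avoiding by blast
  have K_max: "Poly_Mapping.lookup K j \<le> ?k" for j
  proof (cases "j \<in> Poly_Mapping.keys K")
    case True
    then show ?thesis
      using assms(2,4) by (cases "j = 1") auto
  qed (simp add: in_keys_iff)
  have "monomial_span R (\<lambda>a. ?k < Poly_Mapping.lookup a 1) (\<Sum>j=1..d. Poly_Mapping.single (M j) (cs j))"
    using assms(7) unfolding R_def
    by (intro monomial_span_sum monomial_span.monom) (auto simp: Suc_le_eq intro: gen_ring.gen)
  from Lfun_power_congruence[OF R c this K_max q(1,4)] obtain N s where
    "\<not> q dvd N" "s \<in> R" "c ^ m * of_nat N + of_nat q * s = 0"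
    using vanish q(3) by auto
  then have "q \<in> power_prime_divisors R c"
    using power_prime_divisor_of_relation[OF R c _ q(1)] by blast
  with q(2) show False
    by contradiction
qed

end
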